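(* For every sufficiently small $\epsilon>0$ there is a set of $2^{\Omega(\epsilon^{-1/2})}$ distributions supported on $[0,1]$, each having a non-decreasing PDF, such that every two distinct distributions in the set are at Lévy distance $\Omega(\epsilon)$ from each other.
   Context: Lévy distance: $\mathrm{L\acute{e}vy}(F,G)=\inf\{\epsilon: F(v-\epsilon)-\epsilon\le G(v)\le F(v+\epsilon)+\epsilon\ \forall v\}$. (Distributions with non-decreasing PDF are regular, i.e. $qF^{-1}(1-q)$ is concave.) *)

theory Defs
  imports "HOL-Probability.Probability"
begin

definition levy_dist :: "(real \<Rightarrow> real) \<Rightarrow> (real \<Rightarrow> real) \<Rightarrow> real" where
  "levy_dist F G = Inf {e. e \<ge> 0 \<and>
     (\<forall>v. F (v - e) - e \<le> G v \<and> G v \<le> F (v + e) + e)}"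

definition nondec_pdf_dist01 :: "real measure \<Rightarrow> bool" where
  "nondec_pdf_dist01 M \<longleftrightarrow> prob_space M \<and>
     (\<exists>f :: real \<Rightarrow> real. (\<forall>x. 0 \<le> f x) \<and> (\<forall>x. x \<notin> {0..1} \<longrightarrow> f x = 0) \<and>
        mono_on {0..1} f \<and> M = density lborel (\<lambda>x. ennreal (f x)))"

end

theory Submission
  imports Defs
begin

text \<open>Discretise the density 2x of the distribution with cdf x^2 into 2n cells of width 1/(2n).
  For every j < n we may raise the density on cell 2j and lower it on cell 2j+1 by 1/(2n); the
  density stays non-decreasing, and the cdf at the grid point (2j+1)/(2n) rises by 1/(2n)^2.
  This gives 2^n distributions, one per subset B of {..<n}. For B \<noteq> C the cdfs differ by
  1/(2n)^2 at some grid point, and since all densities are bounded by 2 the cdfs are 2-Lipschitz,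
  so the Levy distance is at least 1/(3(2n)^2). Choosing n \<approx> \<epsilon>^(-1/2) gives the theorem.\<close>

subsection \<open>Levy distance\<close>

lemma levy_dist_commute: "levy_dist F G = levy_dist G F"
proof -
  have shift: "(\<forall>v. F (v - e) - e \<le> G v \<and> G v \<le> F (v + e) + e) \<longleftrightarrow>
               (\<forall>v. G (v - e) - e \<le> F v \<and> F v \<le> G (v + e) + e)" for e
  proof
    assume "\<forall>v. F (v - e) - e \<le> G v \<and> G v \<le> F (v + e) + e"
    then show "\<forall>v. G (v - e) - e \<le> F v \<and> F v \<le> G (v + e) + e"
      by (metis add_diff_cancel diff_add_cancel diff_le_eq)
  next
    assume "\<forall>v. G (v - e) - e \<le> F v \<and> F v \<le> G (v + e) + e"
    then show "\<forall>v. F (v - e) - e \<le> G v \<and> G v \<le> F (v + e) + e"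
      by (metis add_diff_cancel diff_add_cancel diff_le_eq)
  qed
  show ?thesis unfolding levy_dist_def shift ..
qed

lemma levy_dist_lower_bound:
  fixes F G :: "real \<Rightarrow> real"
  assumes F01: "\<And>v. F v \<in> {0..1}" and G01: "\<And>v. G v \<in> {0..1}" and "0 \<le> L"
    and gap: "G x + h \<le> F x"
    and lipschitz: "\<And>t. 0 \<le> t \<Longrightarrow> t \<le> h / (L + 1) \<Longrightarrow> G (x + t) \<le> G x + L * t"
  shows "h / (L + 1) \<le> levy_dist F G"
  unfolding levy_dist_def
proof (rule cInf_greatest)
  show "{e. 0 \<le> e \<and> (\<forall>v. F (v - e) - e \<le> G v \<and> G v \<le> F (v + e) + e)} \<noteq> {}"
  proof -
    have "F (v - 1) - 1 \<le> G v \<and> G v \<le> F (v + 1) + 1" for v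
      using F01[of "v - 1"] F01[of "v + 1"] G01[of v] by auto
    then have "1 \<in> {e. 0 \<le> e \<and> (\<forall>v. F (v - e) - e \<le> G v \<and> G v \<le> F (v + e) + e)}"
      by simp
    then show ?thesis by (metis empty_iff)
  qed
next
  fix e assume "e \<in> {e. 0 \<le> e \<and> (\<forall>v. F (v - e) - e \<le> G v \<and> G v \<le> F (v + e) + e)}"
  then have "0 \<le> e" and adm: "\<forall>v. F (v - e) - e \<le> G v \<and> G v \<le> F (v + e) + e"
    by simp_all
  have "F x - e \<le> G (x + e)" using adm[rule_format, of "x + e"] by simp
  show "h / (L + 1) \<le> e"
  proof (rule ccontr)
    assume "\<not> h / (L + 1) \<le> e"
    then have "e < h / (L + 1)" by simp
    then have small: "e \<le> h / (L + 1)" and "(L + 1) * e < h"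
      using \<open>0 \<le> L\<close> by (simp, simp add: pos_less_divide_eq mult.commute)
    have "F x \<le> G x + L * e + e"
      using lipschitz[OF \<open>0 \<le> e\<close> small] \<open>F x - e \<le> G (x + e)\<close> by linarith
    also have "\<dots> = G x + (L + 1) * e" by (simp add: distrib_right)
    finally show False using gap \<open>(L + 1) * e < h\<close> by linarith
  qed
qed

subsection \<open>Step densities on a uniform grid of [0,1]\<close>

definition cell :: "nat \<Rightarrow> nat \<Rightarrow> real set" where
  "cell K m = {real m / real K <.. real (Suc m) / real K}"

definition cell_index :: "nat \<Rightarrow> real \<Rightarrow> nat" where
  "cell_index K x = nat (\<lceil>real K * x\<rceil> - 1)"

definition step_density :: "nat \<Rightarrow> (nat \<Rightarrow> real) \<Rightarrow> real \<Rightarrow> real" where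
  "step_density K w x = (\<Sum>m<K. w m * indicator (cell K m) x)"

lemma mem_cell_iff:
  assumes "0 < K"
  shows "x \<in> cell K m \<longleftrightarrow> 0 < x \<and> m = cell_index K x"
proof -
  have "x \<in> cell K m \<longleftrightarrow> real m < real K * x \<and> real K * x \<le> real m + 1"
    using assms by (simp add: cell_def pos_divide_less_eq pos_le_divide_eq mult.commute add.commute)
  also have "\<dots> \<longleftrightarrow> \<lceil>real K * x\<rceil> = int m + 1"
    by (simp add: ceiling_eq_iff)
  also have "\<dots> \<longleftrightarrow> 0 < x \<and> m = cell_index K x"
  proof -
    have "0 < x \<longleftrightarrow> 1 \<le> \<lceil>real K * x\<rceil>" using assms by (simp add: zero_less_mult_iff)
    moreover have "c = int m + 1 \<longleftrightarrow> 1 \<le> c \<and> m = nat (c - 1)" for c :: int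
      by (auto simp: nat_eq_iff2)
    ultimately show ?thesis unfolding cell_index_def by blast
  qed
  finally show ?thesis .
qed

lemma cell_index_less:
  assumes "0 < K" "x \<le> 1"
  shows "cell_index K x < K"
proof -
  have "\<lceil>real K * x\<rceil> \<le> int K"
    using assms by (intro ceiling_le) (simp add: mult_left_le)
  then show ?thesis using assms(1) by (simp add: cell_index_def)
qed

lemma cell_subset:
  assumes "m < K"
  shows "cell K m \<subseteq> {0<..1}"
proof
  fix x assume "x \<in> cell K m"
  then have "real m / real K < x" "x \<le> real (Suc m) / real K"
    unfolding cell_def greaterThanAtMost_iff by auto
  moreover have "0 \<le> real m / real K" "real (Suc m) / real K \<le> 1" using assms by auto
  ultimately show "x \<in> {0<..1}" by (intro greaterThanAtMost_iff[THEN iffD2] conjI) linarith+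
qed

lemma step_density_eq:
  assumes "0 < K" "0 < x" "x \<le> 1"
  shows "step_density K w x = w (cell_index K x)"
proof -
  have "step_density K w x = (\<Sum>m<K. if m = cell_index K x then w m else 0)"
    unfolding step_density_def using assms by (intro sum.cong) (auto simp: mem_cell_iff)
  then show ?thesis using cell_index_less[OF assms(1,3)] by simp
qed

lemma step_density_eq_0:
  assumes "x \<notin> {0<..1}"
  shows "step_density K w x = 0"
proof -
  have "x \<notin> cell K m" if "m < K" for m using cell_subset[OF that] assms by blast
  then show ?thesis unfolding step_density_def by (intro sum.neutral) simp
qed

lemma step_density_nonneg: "(\<And>m. m < K \<Longrightarrow> 0 \<le> w m) \<Longrightarrow> 0 \<le> step_density K w x"
  unfolding step_density_def by (intro sum_nonneg) simp

lemma mono_on_step_density: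
  assumes "0 < K" and w: "\<And>m. m < K \<Longrightarrow> 0 \<le> w m" "mono_on {..<K} w"
  shows "mono_on {0..1} (step_density K w)"
proof (rule mono_onI)
  fix x y :: real assume xy: "x \<in> {0..1}" "y \<in> {0..1}" "x \<le> y"
  show "step_density K w x \<le> step_density K w y"
  proof (cases "x = 0")
    case True
    then show ?thesis using step_density_eq_0[of x] step_density_nonneg[OF w(1)] by simp
  next
    case False
    then have "0 < x" "0 < y" using xy by auto
    have "cell_index K x \<le> cell_index K y"
      unfolding cell_index_def using \<open>x \<le> y\<close>
      by (intro nat_mono diff_right_mono ceiling_mono mult_left_mono) auto
    then show ?thesis
      using xy \<open>0 < x\<close> \<open>0 < y\<close> assms(1) cell_index_less[OF assms(1)]
      by (auto simp: step_density_eq intro!: mono_onD[OF w(2)])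
  qed
qed

lemma emeasure_cell: "emeasure lborel (cell K m) = ennreal (1 / real K)"
  unfolding cell_def
  by (subst emeasure_lborel_Ioc) (auto simp: divide_right_mono diff_divide_distrib[symmetric])

lemma measure_cell: "measure lborel (cell K m) = 1 / real K"
  by (simp add: measure_def emeasure_cell)

lemma borel_measurable_step_density:
  "(\<lambda>x. ennreal (step_density K w x)) \<in> borel_measurable lborel"
  unfolding step_density_def cell_def by measurable

lemma emeasure_density_step_density:
  assumes w: "\<And>m. m < K \<Longrightarrow> 0 \<le> w m" and A: "A \<in> sets borel"
  shows "emeasure (density lborel (\<lambda>x. ennreal (step_density K w x))) A =
    ennreal (\<Sum>m<K. w m * measure lborel (cell K m \<inter> A))"
proof -
  have cell_borel: "cell K m \<in> sets borel" for m by (simp add: cell_def)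
  have finite: "emeasure lborel (cell K m \<inter> A) = ennreal (measure lborel (cell K m \<inter> A))" for m
  proof (rule emeasure_eq_ennreal_measure)
    have "emeasure lborel (cell K m \<inter> A) \<le> emeasure lborel (cell K m)"
      using cell_borel A by (intro emeasure_mono) auto
    also have "\<dots> < \<top>" by (simp add: emeasure_cell)
    finally show "emeasure lborel (cell K m \<inter> A) \<noteq> \<top>" by simp
  qed
  have "emeasure (density lborel (\<lambda>x. ennreal (step_density K w x))) A =
      (\<integral>\<^sup>+ x. ennreal (step_density K w x) * indicator A x \<partial>lborel)"
    using A borel_measurable_step_density by (intro emeasure_density) auto
  also have "\<dots> = (\<integral>\<^sup>+ x. (\<Sum>m<K. ennreal (w m) * indicator (cell K m \<inter> A) x) \<partial>lborel)"
  proof (rule nn_integral_cong)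
    fix x
    have "ennreal (step_density K w x) * indicator A x =
        ennreal (\<Sum>m<K. w m * indicator (cell K m \<inter> A) x)"
      by (cases "x \<in> A") (simp_all add: step_density_def)
    also have "\<dots> = (\<Sum>m<K. ennreal (w m * indicator (cell K m \<inter> A) x))"
      using w by (subst sum_ennreal) auto
    finally show "ennreal (step_density K w x) * indicator A x =
        (\<Sum>m<K. ennreal (w m) * indicator (cell K m \<inter> A) x)"
      by (simp only: ennreal_mult''[OF indicator_pos_le] ennreal_indicator)
  qed
  also have "\<dots> = (\<Sum>m<K. \<integral>\<^sup>+ x. ennreal (w m) * indicator (cell K m \<inter> A) x \<partial>lborel)"
    using A cell_borel by (intro nn_integral_sum) auto
  also have "\<dots> = (\<Sum>m<K. ennreal (w m) * emeasure lborel (cell K m \<inter> A))"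
    using A cell_borel by (intro sum.cong refl nn_integral_cmult_indicator) auto
  also have "\<dots> = (\<Sum>m<K. ennreal (w m * measure lborel (cell K m \<inter> A)))"
    by (simp add: finite ennreal_mult'')
  also have "\<dots> = ennreal (\<Sum>m<K. w m * measure lborel (cell K m \<inter> A))"
    using w by (subst sum_ennreal) auto
  finally show ?thesis .
qed

lemma measure_density_step_density:
  assumes w: "\<And>m. m < K \<Longrightarrow> 0 \<le> w m" and A: "A \<in> sets borel"
  shows "measure (density lborel (\<lambda>x. ennreal (step_density K w x))) A =
    (\<Sum>m<K. w m * measure lborel (cell K m \<inter> A))"
proof -
  have "0 \<le> (\<Sum>m<K. w m * measure lborel (cell K m \<inter> A))"
    using w by (intro sum_nonneg) auto
  then show ?thesis
    unfolding measure_def[of "density lborel (\<lambda>x. ennreal (step_density K w x))"]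
    by (simp only: emeasure_density_step_density[OF w A] enn2real_ennreal)
qed

lemma prob_space_step_density:
  assumes "0 < K" "\<And>m. m < K \<Longrightarrow> 0 \<le> w m" "(\<Sum>m<K. w m) = real K"
  shows "prob_space (density lborel (\<lambda>x. ennreal (step_density K w x)))"
proof (rule prob_spaceI)
  have "(\<Sum>m<K. w m * measure lborel (cell K m)) = 1"
    using assms by (simp add: measure_cell sum_divide_distrib[symmetric])
  then show "emeasure (density lborel (\<lambda>x. ennreal (step_density K w x)))
      (space (density lborel (\<lambda>x. ennreal (step_density K w x)))) = 1"
    using emeasure_density_step_density[of K w UNIV] assms(2) by simp
qed

lemma nondec_pdf_dist01_step_density:
  assumes "0 < K" "\<And>m. m < K \<Longrightarrow> 0 \<le> w m" "mono_on {..<K} w" "(\<Sum>m<K. w m) = real K"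
  shows "nondec_pdf_dist01 (density lborel (\<lambda>x. ennreal (step_density K w x)))"
  unfolding nondec_pdf_dist01_def
proof (intro conjI exI[of _ "step_density K w"] allI impI refl)
  show "prob_space (density lborel (\<lambda>x. ennreal (step_density K w x)))"
    using assms by (intro prob_space_step_density)
  show "mono_on {0..1} (step_density K w)" using assms by (intro mono_on_step_density)
  show "0 \<le> step_density K w x" for x using assms(2) by (rule step_density_nonneg)
  show "step_density K w x = 0" if "x \<notin> {0..1}" for x
    using that by (intro step_density_eq_0) auto
qed

lemma measure_cell_Iic:
  assumes "0 < K" "0 \<le> t" "t \<le> 1 / real K"
  shows "measure lborel (cell K m \<inter> {..real p / real K + t}) =
    (if m < p then 1 / real K else if m = p then t else 0)"
proof -
  have next_grid: "real (Suc p) / real K = real p / real K + 1 / real K"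
    by (simp add: add_divide_distrib)
  consider "m < p" | "m = p" | "p < m" by linarith
  then show ?thesis
  proof cases
    case 1
    then have "real (Suc m) / real K \<le> real p / real K"
      by (intro divide_right_mono) auto
    then have "cell K m \<inter> {..real p / real K + t} = cell K m"
      using assms by (auto simp: cell_def)
    then show ?thesis using 1 by (simp add: measure_cell)
  next
    case 2
    then have "cell K m \<inter> {..real p / real K + t} = {real p / real K <.. real p / real K + t}"
      using assms next_grid by (auto simp: cell_def)
    then show ?thesis using 2 assms by simp
  next
    case 3
    then have "real (Suc p) / real K \<le> real m / real K"
      by (intro divide_right_mono) auto
    then have "cell K m \<inter> {..real p / real K + t} = {}"
      using assms next_grid by (auto simp: cell_def)
    then show ?thesis using 3 by simp
  qed
qed

lemma cdf_density_step_density: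
  assumes "0 < K" "\<And>m. m < K \<Longrightarrow> 0 \<le> w m" "p < K" "0 \<le> t" "t \<le> 1 / real K"
  shows "cdf (density lborel (\<lambda>x. ennreal (step_density K w x))) (real p / real K + t) =
    (\<Sum>m<p. w m) / real K + w p * t"
proof -
  have "cdf (density lborel (\<lambda>x. ennreal (step_density K w x))) (real p / real K + t) =
      (\<Sum>m<K. w m * measure lborel (cell K m \<inter> {..real p / real K + t}))"
    unfolding cdf_def2 using assms(2) atMost_borel by (rule measure_density_step_density)
  also have "\<dots> = (\<Sum>m<K. (if m < p then w m / real K else 0) + (if m = p then w p * t else 0))"
    using assms by (intro sum.cong refl) (simp add: measure_cell_Iic)
  also have "\<dots> = (\<Sum>m<p. w m / real K) + w p * t"
  proof -
    have "(\<Sum>m<K. if m < p then w m / real K else 0) = (\<Sum>m<p. w m / real K)"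
      using \<open>p < K\<close> by (intro sum.mono_neutral_cong_right) auto
    moreover have "(\<Sum>m<K. if m = p then w p * t else 0) = w p * t"
      using \<open>p < K\<close> by simp
    ultimately show ?thesis by (simp only: sum.distrib)
  qed
  finally show ?thesis by (simp only: sum_divide_distrib)
qed

subsection \<open>The family of perturbed densities\<close>

definition bump_sign :: "nat set \<Rightarrow> nat \<Rightarrow> real" where
  "bump_sign B m = (if m div 2 \<in> B then (if even m then 1 else -1) else 0)"

text \<open>(2m+1)/K is the mean of the density 2x over cell m.\<close>

definition bump_weight :: "nat \<Rightarrow> nat set \<Rightarrow> nat \<Rightarrow> real" where
  "bump_weight K B m = (2 * real m + 1 + bump_sign B m) / real K"

definition bump_distribution :: "nat \<Rightarrow> nat set \<Rightarrow> real measure" where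
  "bump_distribution n B =
     density lborel (\<lambda>x. ennreal (step_density (2 * n) (bump_weight (2 * n) B) x))"

lemma sum_bump_sign: "(\<Sum>m<p. bump_sign B m) = (if odd p \<and> p div 2 \<in> B then 1 else 0)"
proof (induction p)
  case (Suc p)
  then show ?case by (cases "even p") (auto simp: bump_sign_def)
qed simp

lemma sum_odd_numbers: "(\<Sum>m<p. 2 * real m + 1) = real p ^ 2"
  by (induction p) (auto simp: power2_eq_square algebra_simps)

lemma sum_bump_weight:
  "(\<Sum>m<p. bump_weight K B m) = (real p ^ 2 + (if odd p \<and> p div 2 \<in> B then 1 else 0)) / real K"
proof -
  have "(\<Sum>m<p. 2 * real m + 1 + bump_sign B m) = (\<Sum>m<p. 2 * real m + 1) + (\<Sum>m<p. bump_sign B m)"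
    by (rule sum.distrib)
  then show ?thesis
    unfolding bump_weight_def sum_divide_distrib[symmetric] sum_odd_numbers sum_bump_sign by simp
qed

lemma bump_weight_nonneg: "0 \<le> bump_weight K B m"
  unfolding bump_weight_def bump_sign_def by simp

lemma mono_bump_weight: "mono (bump_weight K B)"
proof (rule monoI)
  fix m m' :: nat assume "m \<le> m'"
  have "2 * real m + 1 + bump_sign B m \<le> 2 * real m' + 1 + bump_sign B m'"
  proof (cases "m = m'")
    case False
    with \<open>m \<le> m'\<close> have "real m + 1 \<le> real m'" by linarith
    then show ?thesis by (simp add: bump_sign_def)
  qed simp
  then show "bump_weight K B m \<le> bump_weight K B m'"
    unfolding bump_weight_def by (rule divide_right_mono) simp
qed

lemma bump_weight_le_2:
  assumes "m < K"
  shows "bump_weight K B m \<le> 2"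
proof -
  have "real m + 1 \<le> real K" using assms by linarith
  then have "2 * real m + 1 + bump_sign B m \<le> 2 * real K" by (simp add: bump_sign_def)
  then show ?thesis using assms by (simp add: bump_weight_def divide_le_eq)
qed

lemma nondec_pdf_dist01_bump_distribution:
  assumes "0 < n"
  shows "nondec_pdf_dist01 (bump_distribution n B)"
  unfolding bump_distribution_def
proof (rule nondec_pdf_dist01_step_density)
  show "(\<Sum>m<2 * n. bump_weight (2 * n) B m) = real (2 * n)"
    using assms by (simp add: sum_bump_weight power2_eq_square)
qed (use assms bump_weight_nonneg mono_bump_weight[THEN mono_imp_mono_on] in auto)

lemma real_distribution_bump_distribution:
  assumes "0 < n"
  shows "real_distribution (bump_distribution n B)"
  using nondec_pdf_dist01_bump_distribution[OF assms]
  unfolding real_distribution_def real_distribution_axioms_def nondec_pdf_dist01_def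
  by (simp add: bump_distribution_def)

lemma cdf_bump_distribution:
  assumes "j < n" "0 \<le> t" "t \<le> 1 / real (2 * n)"
  shows "cdf (bump_distribution n B) (real (2 * j + 1) / real (2 * n) + t) =
    (real (2 * j + 1) ^ 2 + (if j \<in> B then 1 else 0)) / real (2 * n) ^ 2
      + bump_weight (2 * n) B (2 * j + 1) * t"
proof -
  have "cdf (bump_distribution n B) (real (2 * j + 1) / real (2 * n) + t) =
      (\<Sum>m<2 * j + 1. bump_weight (2 * n) B m) / real (2 * n) + bump_weight (2 * n) B (2 * j + 1) * t"
    unfolding bump_distribution_def
    using assms bump_weight_nonneg by (intro cdf_density_step_density) auto
  then show ?thesis unfolding sum_bump_weight by (simp add: power2_eq_square)
qed

lemma levy_dist_bump_distribution_at:
  assumes "j < n" "j \<in> B" "j \<notin> C"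
  shows "1 / (12 * real n ^ 2) \<le> levy_dist (cdf (bump_distribution n B)) (cdf (bump_distribution n C))"
proof -
  let ?K = "real (2 * n)" and ?x = "real (2 * j + 1) / real (2 * n)"
  have n: "0 < n" using assms by simp
  have cdf01: "cdf (bump_distribution n D) v \<in> {0..1}" for D v
    using real_distribution_bump_distribution[OF n, of D]
    by (simp add: real_distribution.cdf_bounded_prob finite_borel_measure.cdf_nonneg
                  real_distribution.finite_borel_measure_M)
  have at_grid: "cdf (bump_distribution n D) ?x =
      (real (2 * j + 1) ^ 2 + (if j \<in> D then 1 else 0)) / ?K ^ 2" for D
    using cdf_bump_distribution[of j n 0 D] assms by simp
  have "1 / ?K ^ 2 / (2 + 1) \<le> levy_dist (cdf (bump_distribution n B)) (cdf (bump_distribution n C))"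
  proof (rule levy_dist_lower_bound[OF cdf01 cdf01])
    show "cdf (bump_distribution n C) ?x + 1 / ?K ^ 2 \<le> cdf (bump_distribution n B) ?x"
      using at_grid[of B] at_grid[of C] assms by (simp add: add_divide_distrib)
    show "cdf (bump_distribution n C) (?x + t) \<le> cdf (bump_distribution n C) ?x + 2 * t"
      if "0 \<le> t" "t \<le> 1 / ?K ^ 2 / (2 + 1)" for t
    proof -
      have "1 / ?K ^ 2 / (2 + 1) \<le> 1 / ?K" using n by (simp add: field_simps power2_eq_square)
      then have "t \<le> 1 / ?K" using that by linarith
      then have "cdf (bump_distribution n C) (?x + t) =
          cdf (bump_distribution n C) ?x + bump_weight (2 * n) C (2 * j + 1) * t"
        using cdf_bump_distribution[of j n t C] cdf_bump_distribution[of j n 0 C] assms that by simp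
      moreover have "bump_weight (2 * n) C (2 * j + 1) * t \<le> 2 * t"
        using bump_weight_le_2[of "2 * j + 1" "2 * n" C] assms that by (simp add: mult_right_mono)
      ultimately show ?thesis by simp
    qed
  qed simp
  then show ?thesis by (simp add: power2_eq_square)
qed

lemma inj_on_bump_distribution: "inj_on (bump_distribution n) (Pow {..<n})"
proof (rule inj_onI)
  fix B C assume B: "B \<in> Pow {..<n}" and C: "C \<in> Pow {..<n}"
    and eq: "bump_distribution n B = bump_distribution n C"
  have "j \<in> B \<longleftrightarrow> j \<in> C" if "j < n" for j
  proof -
    have "(if j \<in> B then 1 else 0 :: real) = (if j \<in> C then 1 else 0)"
      using cdf_bump_distribution[of j n 0 B] cdf_bump_distribution[of j n 0 C] that eq by simp
    then show ?thesis by (simp split: if_splits)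
  qed
  then show "B = C" using B C by blast
qed

lemma levy_dist_bump_distribution:
  assumes "B \<subseteq> {..<n}" "C \<subseteq> {..<n}" "B \<noteq> C"
  shows "1 / (12 * real n ^ 2) \<le> levy_dist (cdf (bump_distribution n B)) (cdf (bump_distribution n C))"
proof -
  obtain j where "j < n" "(j \<in> B \<and> j \<notin> C) \<or> (j \<in> C \<and> j \<notin> B)" using assms by blast
  then show ?thesis
  proof (elim disjE conjE)
    assume "j \<in> B" "j \<notin> C"
    then show ?thesis using levy_dist_bump_distribution_at \<open>j < n\<close> by simp
  next
    assume "j \<in> C" "j \<notin> B"
    then show ?thesis using levy_dist_bump_distribution_at \<open>j < n\<close>
      by (subst levy_dist_commute) simp
  qed
qed

lemma levy_separated_family:
  assumes "0 < n"
  obtains S where "finite S" "card S = 2 ^ n" "\<forall>M\<in>S. nondec_pdf_dist01 M"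
    "\<forall>M\<in>S. \<forall>N\<in>S. M \<noteq> N \<longrightarrow> 1 / (12 * real n ^ 2) \<le> levy_dist (cdf M) (cdf N)"
proof (rule that[of "bump_distribution n ` Pow {..<n}"])
  show "card (bump_distribution n ` Pow {..<n}) = 2 ^ n"
    by (simp add: card_image[OF inj_on_bump_distribution] card_Pow)
  show "\<forall>M\<in>bump_distribution n ` Pow {..<n}. nondec_pdf_dist01 M"
    using nondec_pdf_dist01_bump_distribution[OF assms] by auto
  show "\<forall>M\<in>bump_distribution n ` Pow {..<n}. \<forall>N\<in>bump_distribution n ` Pow {..<n}.
      M \<noteq> N \<longrightarrow> 1 / (12 * real n ^ 2) \<le> levy_dist (cdf M) (cdf N)"
    using levy_dist_bump_distribution by auto
qed simp

lemma obtain_nat_inverse_sqrt_bounds: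
  fixes \<epsilon> :: real
  assumes "0 < \<epsilon>" "\<epsilon> < 1/4"
  obtains n :: nat where "0 < n" "\<epsilon> powr (-1/2) \<le> 2 * real n" "real n ^ 2 * \<epsilon> \<le> 1"
proof
  define s where "s = \<epsilon> powr (-1/2)"
  have s2: "s ^ 2 = 1 / \<epsilon>"
    using assms by (simp add: s_def powr_power powr_neg_one)
  have "2 ^ 2 \<le> s ^ 2" using assms by (simp add: s2 field_simps)
  then have "2 \<le> s" by (rule power2_le_imp_le) (simp add: s_def)
  have n: "real (nat \<lfloor>s\<rfloor>) \<le> s" "s < real (nat \<lfloor>s\<rfloor>) + 1"
    using \<open>2 \<le> s\<close> by linarith+
  then have "1 < real (nat \<lfloor>s\<rfloor>)" using \<open>2 \<le> s\<close> by linarith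
  then show "0 < nat \<lfloor>s\<rfloor>" by simp
  show "\<epsilon> powr (-1/2) \<le> 2 * real (nat \<lfloor>s\<rfloor>)"
    unfolding s_def[symmetric] using n \<open>1 < real (nat \<lfloor>s\<rfloor>)\<close> by linarith
  have "real (nat \<lfloor>s\<rfloor>) ^ 2 \<le> s ^ 2" using n \<open>2 \<le> s\<close> by (intro power_mono) auto
  then show "real (nat \<lfloor>s\<rfloor>) ^ 2 * \<epsilon> \<le> 1" using assms by (simp add: s2 field_simps)
qed

lemma levy_separated_family_powr:
  fixes \<epsilon> :: real
  assumes "0 < \<epsilon>" "\<epsilon> < 1/4"
  shows "\<exists>S :: real measure set. finite S \<and>
    2 powr (1/2 * \<epsilon> powr (-1/2)) \<le> real (card S) \<and>
    (\<forall>M\<in>S. nondec_pdf_dist01 M) \<and>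
    (\<forall>M\<in>S. \<forall>N\<in>S. M \<noteq> N \<longrightarrow> 1/12 * \<epsilon> \<le> levy_dist (cdf M) (cdf N))"
proof -
  obtain n where n: "0 < n" "\<epsilon> powr (-1/2) \<le> 2 * real n" "real n ^ 2 * \<epsilon> \<le> 1"
    using assms by (rule obtain_nat_inverse_sqrt_bounds)
  obtain S where S: "finite S" "card S = 2 ^ n" "\<forall>M\<in>S. nondec_pdf_dist01 M"
      "\<forall>M\<in>S. \<forall>N\<in>S. M \<noteq> N \<longrightarrow> 1 / (12 * real n ^ 2) \<le> levy_dist (cdf M) (cdf N)"
    by (rule levy_separated_family[OF n(1)])
  have "2 powr (1/2 * \<epsilon> powr (-1/2)) \<le> 2 powr real n" using n(2) by (intro powr_mono) auto
  then have size: "2 powr (1/2 * \<epsilon> powr (-1/2)) \<le> real (card S)" by (simp add: S(2) powr_realpow)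
  have "1/12 * \<epsilon> \<le> 1 / (12 * real n ^ 2)" using n by (simp add: field_simps)
  then have "\<forall>M\<in>S. \<forall>N\<in>S. M \<noteq> N \<longrightarrow> 1/12 * \<epsilon> \<le> levy_dist (cdf M) (cdf N)"
    using S(4) by (meson order_trans)
  then show ?thesis using S(1,3) size by (intro exI[of _ S] conjI)
qed

theorem theorem5:
  shows "\<exists>c1 > 0. \<exists>c2 > 0. \<exists>\<epsilon>0 > 0. \<forall>\<epsilon>::real. 0 < \<epsilon> \<and> \<epsilon> < \<epsilon>0 \<longrightarrow>
     (\<exists>S :: real measure set. finite S \<and>
        real (card S) \<ge> 2 powr (c1 * \<epsilon> powr (-1/2)) \<and>
        (\<forall>M\<in>S. nondec_pdf_dist01 M) \<and>
        (\<forall>M\<in>S. \<forall>N\<in>S. M \<noteq> N \<longrightarrow> levy_dist (cdf M) (cdf N) \<ge> c2 * \<epsilon>))"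
  by (rule exI[of _ "1/2"], rule conjI, simp, rule exI[of _ "1/12"], rule conjI, simp,
      rule exI[of _ "1/4"], rule conjI, simp, blast intro: levy_separated_family_powr)

end
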